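(* Let $(X_0,d_0),(X_1,d_1),\dots,(X_q,d_q),(Y_1,D_1),\dots,(Y_Q,D_Q)$ be $C^\infty$ vector fields on a neighborhood $\Omega$ of $0$ in $\mathbb{R}^n$, each paired with a degree in $[0,\infty)^\nu\setminus\{0\}$, and let $W(t,x)$ be a $C^\infty$ map from a neighborhood of $(0,0)$ in $\mathbb{R}^N\times\mathbb{R}^n$ into $\mathbb{R}^n$ with $W(0,x)\equiv0$. Write $(\mathbf X,\mathbf d)=\{(X_l,d_l)\}_{l=1}^q$ and $(\mathbf Y,\mathbf D)=\{(Y_i,D_i)\}_{i=1}^Q$, and suppose $(\mathbf X,\mathbf d)\subseteq(\mathbf Y,\mathbf D)$. (i) If $(\mathbf Y,\mathbf D)$ controls $(X_0,d_0)$ and $(\mathbf X,\mathbf d)$ controls every element of $(\mathbf Y,\mathbf D)$, then $(\mathbf X,\mathbf d)$ controls $(X_0,d_0)$. (ii) If $(\mathbf Y,\mathbf D)$ controls $W$ and $(\mathbf X,\mathbf d)$ controls every element of $(\mathbf Y,\mathbf D)$, then $(\mathbf X,\mathbf d)$ controls $W$.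
   Context: Fix $e=\{e_1,\dots,e_N\}\subseteq[0,\infty)^\nu$; $\delta^d=\prod_\mu\delta_\mu^{d^\mu}$ ($0^0=1$), $\delta t=(\delta^{e_1}t_1,\dots,\delta^{e_N}t_N)$. For a finite list $(\mathbf Z,\mathbf D)=\{(Z_l,D_l)\}$ of vector fields on $\Omega$ with degrees: $B_{(\mathbf Z,\mathbf D)}(x,\delta)$ is the set of $y\in\Omega$ reachable from $x$ by an absolutely continuous $\gamma:[0,1]\to\Omega$ with $\gamma'=\sum_la_l\delta^{D_l}Z_l(\gamma)$ a.e., $\|\sum|a_l|^2\|_{L^\infty}<1$ (subspace topology); $\mathcal C(x,\delta,\Omega)$ means every such ODE from $x$ has an absolutely continuous solution $[0,1]\to\Omega$; $\vec\xi=(\xi,\dots,\xi)$; $(\delta\mathbf Z)^\beta$ composes $\delta^{D_{\beta_i}}Z_{\beta_i}$ along an ordered list $\beta$; $\|f\|_{C(V)}=\sup_V|f|$ with continuity. $(\mathbf Z,\mathbf D)$ controls $(X_0,d_0)$ if there are a neighborhood $U\subseteq\Omega$ of $0$ and $\xi_1>0$ with $\mathcal C(x,\vec{\xi_1},\Omega)$ for $x\in U$, and for all $x\in U,\delta\in[0,1]^\nu$: $\delta^{d_0}X_0=\sum_lc_l^{x,\delta}\delta^{D_l}Z_l$ on $B_{(\mathbf Z,\mathbf D)}(x,\xi_1\delta)$ with $\sup_{x,\delta}\sum_{|\beta|\le m}\|(\delta\mathbf Z)^\beta c_l^{x,\delta}\|_{C(B_{(\mathbf Z,\mathbf D)}(x,\xi_1\delta))}<\infty$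 for all $m$. $(\mathbf Z,\mathbf D)$ controls $W$ if there are $\rho'>0$, $\xi_1>0$, neighborhood $U$ with $\mathcal C(x,\vec{\xi_1},\Omega)$ for $x\in U$ and for all $x\in U$, $\delta\in[0,1]^\nu$: $W(\delta t,u)=\sum_lc_l^{x,\delta}(t,u)\delta^{D_l}Z_l(u)$ on $B^N(\rho')\times B_{(\mathbf Z,\mathbf D)}(x,\xi_1\delta)$ with $\sup_{x,\delta}\sum_{|\beta'|+|\beta|\le m}\|\partial_t^\beta(\delta\mathbf Z)^{\beta'}c_l^{x,\delta}\|_{C(B^N(\rho')\times B_{(\mathbf Z,\mathbf D)}(x,\xi_1\delta))}<\infty$ for all $m$. *)

theory Defs
  imports "HOL-Analysis.Analysis"
begin

coinductive smooth_on :: "'a::euclidean_space set \<Rightarrow> ('a \<Rightarrow> 'b::real_normed_vector) \<Rightarrow> bool"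
  for S where
  smooth_onI: "f differentiable_on S \<Longrightarrow> (\<forall>v. smooth_on S (\<lambda>x. frechet_derivative f (at x) v))
     \<Longrightarrow> smooth_on S f"

definition abs_cont_on :: "real \<Rightarrow> real \<Rightarrow> (real \<Rightarrow> 'b::real_normed_vector) \<Rightarrow> bool" where
  "abs_cont_on a b g \<longleftrightarrow>
     (\<forall>\<epsilon>>0. \<exists>d>0. \<forall>(k::nat) (u::nat \<Rightarrow> real) v.
        (\<forall>i<k. a \<le> u i \<and> u i \<le> v i \<and> v i \<le> b) \<and>
        (\<forall>i<k. \<forall>j<k. i \<noteq> j \<longrightarrow> v i \<le> u j \<or> v j \<le> u i) \<and>
        (\<Sum>i<k. v i - u i) < d
        \<longrightarrow> (\<Sum>i<k. norm (g (v i) - g (u i))) < \<epsilon>)"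

definition is_degree :: "real^'v \<Rightarrow> bool" where
  "is_degree d \<longleftrightarrow> (\<forall>\<mu>. 0 \<le> d $ \<mu>) \<and> d \<noteq> 0"

text \<open>\<delta>^d = prod_\<mu> \<delta>_\<mu>^(d^\<mu>), with the convention 0^0 = 1.\<close>
definition degpow :: "real^'v \<Rightarrow> real^'v \<Rightarrow> real" where
  "degpow \<delta> d = (\<Prod>\<mu>\<in>UNIV. if d $ \<mu> = 0 then 1 else (\<delta> $ \<mu>) powr (d $ \<mu>))"

definition unit_cube :: "(real^'v) set" where
  "unit_cube = {\<delta>. \<forall>\<mu>. 0 \<le> \<delta> $ \<mu> \<and> \<delta> $ \<mu> \<le> 1}"

definition tscale :: "('k \<Rightarrow> real^'v) \<Rightarrow> real^'v \<Rightarrow> real^'k \<Rightarrow> real^'k" where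
  "tscale e \<delta> t = (\<chi> j. degpow \<delta> (e j) * t $ j)"

definition sfield :: "real^'v \<Rightarrow> ((real^'n \<Rightarrow> real^'n) \<times> (real^'v)) \<Rightarrow> real^'n \<Rightarrow> real^'n" where
  "sfield \<delta> ZD = (\<lambda>y. degpow \<delta> (snd ZD) *\<^sub>R fst ZD y)"

definition adm_coeffs :: "nat \<Rightarrow> (nat \<Rightarrow> real \<Rightarrow> real) \<Rightarrow> bool" where
  "adm_coeffs L a \<longleftrightarrow> (\<forall>l<L. a l \<in> borel_measurable (lebesgue_on {0..1})) \<and>
     (\<exists>c<1. AE t in lebesgue_on {0..1}. (\<Sum>l<L. (a l t)\<^sup>2) \<le> c)"

definition ode_sol :: "(real^'n) set \<Rightarrow> ((real^'n \<Rightarrow> real^'n) \<times> (real^'v)) list \<Rightarrow> real^'v \<Rightarrow>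
    real^'n \<Rightarrow> (nat \<Rightarrow> real \<Rightarrow> real) \<Rightarrow> (real \<Rightarrow> real^'n) \<Rightarrow> bool" where
  "ode_sol \<Omega> Zs \<delta> x a \<gamma> \<longleftrightarrow> abs_cont_on 0 1 \<gamma> \<and> \<gamma> ` {0..1} \<subseteq> \<Omega> \<and> \<gamma> 0 = x \<and>
     (AE t in lebesgue_on {0..1}.
        (\<gamma> has_vector_derivative (\<Sum>l<length Zs. a l t *\<^sub>R sfield \<delta> (Zs ! l) (\<gamma> t))) (at t within {0..1}))"

definition zball :: "(real^'n) set \<Rightarrow> ((real^'n \<Rightarrow> real^'n) \<times> (real^'v)) list \<Rightarrow> real^'n \<Rightarrow> real^'v
    \<Rightarrow> (real^'n) set" where
  "zball \<Omega> Zs x \<delta> = {y \<in> \<Omega>. \<exists>a \<gamma>. adm_coeffs (length Zs) a \<and> ode_sol \<Omega> Zs \<delta> x a \<gamma> \<and> \<gamma> 1 = y}"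

definition ode_solvable :: "(real^'n) set \<Rightarrow> ((real^'n \<Rightarrow> real^'n) \<times> (real^'v)) list \<Rightarrow> real^'n
    \<Rightarrow> real^'v \<Rightarrow> bool" where
  "ode_solvable \<Omega> Zs x \<delta> \<longleftrightarrow> (\<forall>a. adm_coeffs (length Zs) a \<longrightarrow> (\<exists>\<gamma>. ode_sol \<Omega> Zs \<delta> x a \<gamma>))"

definition lie_deriv_on :: "(real^'n) set \<Rightarrow> (real^'n \<Rightarrow> real^'n) \<Rightarrow> (real^'n \<Rightarrow> real)
    \<Rightarrow> (real^'n \<Rightarrow> real) \<Rightarrow> bool" where
  "lie_deriv_on S V f g \<longleftrightarrow> (\<forall>y\<in>S. \<forall>\<gamma> \<epsilon>. 0 < \<epsilon> \<and> \<gamma> 0 = y \<and>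
      (\<forall>s\<in>{-\<epsilon><..<\<epsilon>}. (\<gamma> has_vector_derivative V (\<gamma> s)) (at s))
      \<longrightarrow> ((\<lambda>s. f (\<gamma> s)) has_real_derivative g y) (at 0))"

text \<open>(Z,D) controls (X0,d0).  G x \<delta> l \<beta> is (\<delta>Z)^\<beta> c_l^{x,\<delta>}.\<close>
definition controls_vf :: "(real^'n) set \<Rightarrow> ((real^'n \<Rightarrow> real^'n) \<times> (real^'v)) list
    \<Rightarrow> (real^'n \<Rightarrow> real^'n) \<Rightarrow> real^'v \<Rightarrow> bool" where
  "controls_vf \<Omega> Zs X0 d0 \<longleftrightarrow> (\<exists>U \<xi>. open U \<and> 0 \<in> U \<and> U \<subseteq> \<Omega> \<and> 0 < \<xi> \<and>
     (\<forall>x\<in>U. ode_solvable \<Omega> Zs x (vec \<xi>)) \<and>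
     (\<exists>(c :: real^'n \<Rightarrow> real^'v \<Rightarrow> nat \<Rightarrow> real^'n \<Rightarrow> real)
        (G :: real^'n \<Rightarrow> real^'v \<Rightarrow> nat \<Rightarrow> nat list \<Rightarrow> real^'n \<Rightarrow> real).
       (\<forall>x\<in>U. \<forall>\<delta>\<in>unit_cube.
          (\<forall>y\<in>zball \<Omega> Zs x (\<xi> *\<^sub>R \<delta>).
             degpow \<delta> d0 *\<^sub>R X0 y = (\<Sum>l<length Zs. c x \<delta> l y *\<^sub>R sfield \<delta> (Zs ! l) y)) \<and>
          (\<forall>l<length Zs.
             (\<forall>y\<in>zball \<Omega> Zs x (\<xi> *\<^sub>R \<delta>). G x \<delta> l [] y = c x \<delta> l y) \<and>
             (\<forall>\<beta> j. set \<beta> \<subseteq> {..<length Zs} \<and> j < length Zs \<longrightarrow>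
                lie_deriv_on (zball \<Omega> Zs x (\<xi> *\<^sub>R \<delta>)) (sfield \<delta> (Zs ! j))
                  (G x \<delta> l \<beta>) (G x \<delta> l (j # \<beta>))) \<and>
             (\<forall>\<beta>. set \<beta> \<subseteq> {..<length Zs} \<longrightarrow>
                continuous_on (zball \<Omega> Zs x (\<xi> *\<^sub>R \<delta>)) (G x \<delta> l \<beta>)))) \<and>
       (\<forall>m. \<exists>C. \<forall>x\<in>U. \<forall>\<delta>\<in>unit_cube. \<forall>l<length Zs. \<forall>\<beta>.
          set \<beta> \<subseteq> {..<length Zs} \<and> length \<beta> \<le> m \<longrightarrow>
          (\<forall>y\<in>zball \<Omega> Zs x (\<xi> *\<^sub>R \<delta>). \<bar>G x \<delta> l \<beta> y\<bar> \<le> C))))"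

text \<open>(Z,D) controls W.  H x \<delta> l \<alpha> \<beta> t u is (\<partial>_t^\<alpha> (\<delta>Z)^\<beta> c_l^{x,\<delta>})(t,u).\<close>
definition controls_W :: "(real^'n) set \<Rightarrow> ((real^'n \<Rightarrow> real^'n) \<times> (real^'v)) list
    \<Rightarrow> ('k \<Rightarrow> real^'v) \<Rightarrow> ((real^'k) \<times> (real^'n) \<Rightarrow> real^'n) \<Rightarrow> bool" where
  "controls_W \<Omega> Zs e W \<longleftrightarrow> (\<exists>\<rho> U \<xi>. 0 < \<rho> \<and> open U \<and> 0 \<in> U \<and> U \<subseteq> \<Omega> \<and> 0 < \<xi> \<and>
     (\<forall>x\<in>U. ode_solvable \<Omega> Zs x (vec \<xi>)) \<and>
     (\<exists>(c :: real^'n \<Rightarrow> real^'v \<Rightarrow> nat \<Rightarrow> real^'k \<Rightarrow> real^'n \<Rightarrow> real)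
        (H :: real^'n \<Rightarrow> real^'v \<Rightarrow> nat \<Rightarrow> ('k \<Rightarrow> nat) \<Rightarrow> nat list \<Rightarrow> real^'k \<Rightarrow> real^'n \<Rightarrow> real).
       (\<forall>x\<in>U. \<forall>\<delta>\<in>unit_cube.
          (\<forall>t\<in>ball 0 \<rho>. \<forall>u\<in>zball \<Omega> Zs x (\<xi> *\<^sub>R \<delta>).
             W (tscale e \<delta> t, u) = (\<Sum>l<length Zs. c x \<delta> l t u *\<^sub>R sfield \<delta> (Zs ! l) u)) \<and>
          (\<forall>l<length Zs.
             (\<forall>t\<in>ball 0 \<rho>. \<forall>u\<in>zball \<Omega> Zs x (\<xi> *\<^sub>R \<delta>). H x \<delta> l (\<lambda>_. 0) [] t u = c x \<delta> l t u) \<and>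
             (\<forall>\<beta> j. set \<beta> \<subseteq> {..<length Zs} \<and> j < length Zs \<longrightarrow> (\<forall>t\<in>ball 0 \<rho>.
                lie_deriv_on (zball \<Omega> Zs x (\<xi> *\<^sub>R \<delta>)) (sfield \<delta> (Zs ! j))
                  (H x \<delta> l (\<lambda>_. 0) \<beta> t) (H x \<delta> l (\<lambda>_. 0) (j # \<beta>) t))) \<and>
             (\<forall>\<alpha> \<beta> i. set \<beta> \<subseteq> {..<length Zs} \<longrightarrow>
                (\<forall>t\<in>ball 0 \<rho>. \<forall>u\<in>zball \<Omega> Zs x (\<xi> *\<^sub>R \<delta>).
                  ((\<lambda>s. H x \<delta> l \<alpha> \<beta> (t + s *\<^sub>R axis i 1) u) has_real_derivative
                     H x \<delta> l (\<alpha>(i := Suc (\<alpha> i))) \<beta> t u) (at 0))) \<and>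
             (\<forall>\<alpha> \<beta>. set \<beta> \<subseteq> {..<length Zs} \<longrightarrow>
                continuous_on (ball 0 \<rho> \<times> zball \<Omega> Zs x (\<xi> *\<^sub>R \<delta>))
                  (\<lambda>p. H x \<delta> l \<alpha> \<beta> (fst p) (snd p))))) \<and>
       (\<forall>m. \<exists>C. \<forall>x\<in>U. \<forall>\<delta>\<in>unit_cube. \<forall>l<length Zs. \<forall>\<alpha> \<beta>.
          set \<beta> \<subseteq> {..<length Zs} \<and> sum \<alpha> UNIV + length \<beta> \<le> m \<longrightarrow>
          (\<forall>t\<in>ball 0 \<rho>. \<forall>u\<in>zball \<Omega> Zs x (\<xi> *\<^sub>R \<delta>). \<bar>H x \<delta> l \<alpha> \<beta> t u\<bar> \<le> C))))"

end

theory Submission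
  imports Defs
begin

text \<open>
  Every field X_l is some Y_(\<sigma> l), so an admissible control for the X-fields at scale r\<delta>
  regroups into one for the Y-fields at scale \<delta>, its coefficients damped by r^|d_l|; by
  Cauchy-Schwarz it stays admissible once these factors are small. Hence for a small common
  radius \<xi> the ball B_X(x, \<xi>\<delta>) lies in the Y-ball on which X_0 (or W) is expanded and in the
  X-balls on which the Y_i are expanded. Substituting \<delta>^D_i Y_i = \<Sum>_l c_il \<delta>^d_l X_l into
  \<delta>^d_0 X_0 = \<Sum>_i c_i \<delta>^D_i Y_i gives the coefficients \<Sum>_i c_i c_il. Their derivatives along
  an X-word follow from the Leibniz rule, reading the word as a Y-word in the factor c_i: a
  derivative of order m is a sum of 2^m products of derivatives that are already continuous and
  uniformly bounded.
\<close>

section \<open>Rescaling control balls\<close>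

lemma degpow_scaleR: "degpow (r *\<^sub>R \<delta>) d = degpow (vec r) d * degpow \<delta> d"
  unfolding degpow_def prod.distrib[symmetric]
  by (rule prod.cong) (auto simp: powr_mult)

lemma degpow_vec: "0 < s \<Longrightarrow> degpow (vec s) d = s powr (\<Sum>\<mu>\<in>UNIV. d $ \<mu>)"
  unfolding degpow_def by (simp add: powr_sum) (rule prod.cong, auto)

lemma degpow_nonneg: "0 \<le> degpow \<delta> d"
  unfolding degpow_def by (rule prod_nonneg) auto

lemma is_degree_sum_pos:
  assumes "is_degree d" shows "0 < (\<Sum>\<mu>\<in>UNIV. d $ \<mu>)"
proof -
  have nonneg: "\<forall>\<mu>. 0 \<le> d $ \<mu>" and "d \<noteq> 0" using assms unfolding is_degree_def by auto
  then obtain \<mu> where "d $ \<mu> \<noteq> 0" by (metis vec_eq_iff zero_index)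
  with nonneg have "0 < d $ \<mu>" by (metis order_le_less)
  also have "d $ \<mu> \<le> (\<Sum>\<mu>\<in>UNIV. d $ \<mu>)"
    by (rule member_le_sum) (use nonneg in auto)
  finally show ?thesis .
qed

lemma degpow_vec_le_1: "0 < s \<Longrightarrow> s \<le> 1 \<Longrightarrow> is_degree d \<Longrightarrow> degpow (vec s) d \<le> 1"
  by (simp add: degpow_vec powr_le1 is_degree_sum_pos less_imp_le)

lemma degpow_vec_tendsto_0:
  assumes "is_degree d" shows "((\<lambda>r. degpow (vec r) d) \<longlongrightarrow> 0) (at_right 0)"
proof -
  have "((\<lambda>r. r powr (\<Sum>\<mu>\<in>UNIV. d $ \<mu>)) \<longlongrightarrow> 0) (at_right 0)"
    by (rule tendsto_zero_powrI[OF tendsto_ident_at tendsto_const _ is_degree_sum_pos[OF assms]])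
       (rule eventually_mono[OF eventually_at_right_less], simp)
  then show ?thesis
    by (rule Lim_transform_eventually) (rule eventually_mono[OF eventually_at_right_less], simp add: degpow_vec)
qed

lemma sfield_scaleR: "sfield (r *\<^sub>R \<delta>) Z y = degpow (vec r) (snd Z) *\<^sub>R sfield \<delta> Z y"
  unfolding sfield_def by (simp add: degpow_scaleR)

lemma ode_sol_cong:
  assumes "\<And>t y. (\<Sum>l<length Xs. a l t *\<^sub>R sfield \<delta> (Xs ! l) y) =
                   (\<Sum>i<length Ys. b i t *\<^sub>R sfield \<delta>' (Ys ! i) y)"
  shows "ode_sol \<Omega> Xs \<delta> x a \<gamma> = ode_sol \<Omega> Ys \<delta>' x b \<gamma>"
  unfolding ode_sol_def assms ..

lemma adm_coeffs_mono:
  assumes "adm_coeffs L a"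
    and "\<forall>i<M. b i \<in> borel_measurable (lebesgue_on {0..1})"
    and "\<And>t. (\<Sum>i<M. (b i t)\<^sup>2) \<le> (\<Sum>l<L. (a l t)\<^sup>2)"
  shows "adm_coeffs M b"
proof -
  obtain c where "c < 1" and ae: "AE t in lebesgue_on {0..1}. (\<Sum>l<L. (a l t)\<^sup>2) \<le> c"
    using assms(1) unfolding adm_coeffs_def by blast
  then show ?thesis
    unfolding adm_coeffs_def using assms(2)
    by (auto intro!: exI[of _ c] eventually_mono[OF ae] order_trans[OF assms(3)])
qed

lemma sum_fibres_square_le:
  fixes a \<kappa> :: "nat \<Rightarrow> real" and \<sigma> :: "nat \<Rightarrow> nat"
  assumes "\<forall>l<L. \<sigma> l < n" and "\<forall>l<L. real L * (\<kappa> l)\<^sup>2 \<le> 1"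
  shows "(\<Sum>i<n. (\<Sum>l\<in>{l\<in>{..<L}. \<sigma> l = i}. a l * \<kappa> l)\<^sup>2) \<le> (\<Sum>l<L. (a l)\<^sup>2)"
proof -
  let ?F = "\<lambda>i. {l\<in>{..<L}. \<sigma> l = i}"
  have "(\<Sum>l\<in>?F i. a l * \<kappa> l)\<^sup>2 \<le> real L * (\<Sum>l\<in>?F i. (a l * \<kappa> l)\<^sup>2)" for i
  proof -
    have "(\<Sum>l\<in>?F i. a l * \<kappa> l)\<^sup>2 \<le> real (card (?F i)) * (\<Sum>l\<in>?F i. (a l * \<kappa> l)\<^sup>2)"
      using Cauchy_Schwarz_ineq_sum[of "\<lambda>l. a l * \<kappa> l" "\<lambda>_. 1" "?F i"] by (simp add: mult.commute)
    also have "\<dots> \<le> real L * (\<Sum>l\<in>?F i. (a l * \<kappa> l)\<^sup>2)"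
      using card_mono[of "{..<L}" "?F i"] by (intro mult_right_mono sum_nonneg) auto
    finally show ?thesis .
  qed
  then have "(\<Sum>i<n. (\<Sum>l\<in>?F i. a l * \<kappa> l)\<^sup>2) \<le> (\<Sum>i<n. \<Sum>l\<in>?F i. real L * (a l * \<kappa> l)\<^sup>2)"
    by (simp add: sum_mono sum_distrib_left)
  also have "\<dots> = (\<Sum>l<L. real L * (a l * \<kappa> l)\<^sup>2)"
    using assms(1) by (intro sum.group) auto
  also have "\<dots> = (\<Sum>l<L. (a l)\<^sup>2 * (real L * (\<kappa> l)\<^sup>2))"
    by (simp add: power_mult_distrib algebra_simps)
  also have "\<dots> \<le> (\<Sum>l<L. (a l)\<^sup>2)"
    using assms(2) by (intro sum_mono) (simp add: mult_left_le)
  finally show ?thesis .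
qed

lemma zball_rescale_subset:
  assumes \<sigma>: "\<forall>l<length Xs. \<sigma> l < length Ys \<and> Ys ! \<sigma> l = Xs ! l"
    and small: "\<forall>l<length Xs. real (length Xs) * (degpow (vec r) (snd (Xs ! l)))\<^sup>2 \<le> 1"
  shows "zball \<Omega> Xs x (r *\<^sub>R \<delta>) \<subseteq> zball \<Omega> Ys x \<delta>"
proof
  fix y assume "y \<in> zball \<Omega> Xs x (r *\<^sub>R \<delta>)"
  then obtain a \<gamma> where y: "y \<in> \<Omega>" "\<gamma> 1 = y" and adm: "adm_coeffs (length Xs) a"
    and sol: "ode_sol \<Omega> Xs (r *\<^sub>R \<delta>) x a \<gamma>"
    unfolding zball_def by blast
  define \<kappa> where "\<kappa> l = degpow (vec r) (snd (Xs ! l))" for l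
  define F where "F i = {l\<in>{..<length Xs}. \<sigma> l = i}" for i
  define b where "b i t = (\<Sum>l\<in>F i. a l t * \<kappa> l)" for i t
  have "(\<Sum>l<length Xs. a l t *\<^sub>R sfield (r *\<^sub>R \<delta>) (Xs ! l) z) =
        (\<Sum>i<length Ys. b i t *\<^sub>R sfield \<delta> (Ys ! i) z)" for t z
  proof -
    have "(\<Sum>i<length Ys. b i t *\<^sub>R sfield \<delta> (Ys ! i) z) =
          (\<Sum>i<length Ys. \<Sum>l\<in>F i. (a l t * \<kappa> l) *\<^sub>R sfield \<delta> (Xs ! l) z)"
      unfolding b_def scaleR_sum_left using \<sigma> by (intro sum.cong refl) (auto simp: F_def)
    also have "\<dots> = (\<Sum>l<length Xs. (a l t * \<kappa> l) *\<^sub>R sfield \<delta> (Xs ! l) z)"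
      unfolding F_def using \<sigma> by (intro sum.group) auto
    finally show ?thesis by (simp add: \<kappa>_def sfield_scaleR)
  qed
  then have "ode_sol \<Omega> Ys \<delta> x b \<gamma>"
    using sol ode_sol_cong by blast
  moreover have "adm_coeffs (length Ys) b"
  proof (rule adm_coeffs_mono[OF adm])
    show "\<forall>i<length Ys. b i \<in> borel_measurable (lebesgue_on {0..1})"
      using adm unfolding adm_coeffs_def b_def F_def by (auto intro!: borel_measurable_sum)
    show "(\<Sum>i<length Ys. (b i t)\<^sup>2) \<le> (\<Sum>l<length Xs. (a l t)\<^sup>2)" for t
      unfolding b_def F_def using \<sigma> small by (intro sum_fibres_square_le) (auto simp: \<kappa>_def)
  qed
  ultimately show "y \<in> zball \<Omega> Ys x \<delta>"
    unfolding zball_def using y by blast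
qed

lemma ode_solvable_rescale:
  assumes sol: "ode_solvable \<Omega> Zs x \<delta>"
    and small: "\<forall>l<length Zs. degpow (vec r) (snd (Zs ! l)) \<le> 1"
  shows "ode_solvable \<Omega> Zs x (r *\<^sub>R \<delta>)"
  unfolding ode_solvable_def
proof (intro allI impI)
  fix a assume adm: "adm_coeffs (length Zs) a"
  define b where "b l t = a l t * degpow (vec r) (snd (Zs ! l))" for l t
  have "adm_coeffs (length Zs) b"
  proof (rule adm_coeffs_mono[OF adm])
    show "\<forall>l<length Zs. b l \<in> borel_measurable (lebesgue_on {0..1})"
      using adm unfolding adm_coeffs_def b_def by auto
    show "(\<Sum>l<length Zs. (b l t)\<^sup>2) \<le> (\<Sum>l<length Zs. (a l t)\<^sup>2)" for t
      unfolding b_def power_mult_distrib using small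
      by (intro sum_mono mult_left_le) (auto simp: degpow_nonneg power_le_one)
  qed
  then obtain \<gamma> where "ode_sol \<Omega> Zs \<delta> x b \<gamma>"
    using sol unfolding ode_solvable_def by blast
  moreover have "ode_sol \<Omega> Zs \<delta> x b \<gamma> = ode_sol \<Omega> Zs (r *\<^sub>R \<delta>) x a \<gamma>"
    by (rule ode_sol_cong) (simp add: b_def sfield_scaleR)
  ultimately show "\<exists>\<gamma>. ode_sol \<Omega> Zs (r *\<^sub>R \<delta>) x a \<gamma>" by blast
qed

definition control_nbhd :: "(real^'n) set \<Rightarrow> ((real^'n \<Rightarrow> real^'n) \<times> (real^'v)) list \<Rightarrow>
    (real^'n) set \<Rightarrow> real \<Rightarrow> bool" where
  "control_nbhd \<Omega> Zs U \<xi> \<longleftrightarrow>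
     open U \<and> 0 \<in> U \<and> U \<subseteq> \<Omega> \<and> 0 < \<xi> \<and> (\<forall>x\<in>U. ode_solvable \<Omega> Zs x (vec \<xi>))"

lemma eventually_rescale_small:
  assumes "\<forall>l<length Xs. is_degree (snd (Xs ! l))"
  shows "\<forall>\<^sub>F r in at_right 0. r < 1 \<and>
           (\<forall>l<length Xs. real (length Xs) * (degpow (vec r) (snd (Xs ! l)))\<^sup>2 \<le> 1)"
proof -
  have "\<forall>\<^sub>F r in at_right 0. real (length Xs) * (degpow (vec r) (snd (Xs ! l)))\<^sup>2 < 1"
    if "l < length Xs" for l
  proof (rule order_tendstoD(2))
    show "((\<lambda>r. real (length Xs) * (degpow (vec r) (snd (Xs ! l)))\<^sup>2) \<longlongrightarrow> real (length Xs) * 0\<^sup>2)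
        (at_right 0)"
      using degpow_vec_tendsto_0 assms that by (intro tendsto_intros) auto
  qed simp
  then have "\<forall>\<^sub>F r in at_right 0. \<forall>l\<in>{..<length Xs}.
      real (length Xs) * (degpow (vec r) (snd (Xs ! l)))\<^sup>2 < 1"
    by (intro eventually_ball_finite) auto
  moreover have "\<forall>\<^sub>F r in at_right (0::real). r < 1"
    by (rule order_tendstoD(2)[OF tendsto_ident_at]) simp
  ultimately show ?thesis
    by eventually_elim (auto simp: less_imp_le)
qed

lemma common_control_nbhd:
  assumes \<sigma>: "\<forall>l<length Xs. \<sigma> l < length Ys \<and> Ys ! \<sigma> l = Xs ! l"
    and "\<forall>(Z, D)\<in>set Xs. is_degree D"
    and Y: "control_nbhd \<Omega> Ys UY \<xi>Y"
    and I: "\<forall>i<length Ys. control_nbhd \<Omega> Xs (UI i) (\<xi>I i)"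
    and "Ys \<noteq> []"
  obtains \<xi> where "control_nbhd \<Omega> Xs (UY \<inter> (\<Inter>i<length Ys. UI i)) \<xi>"
    and "\<And>x \<delta>. zball \<Omega> Xs x (\<xi> *\<^sub>R \<delta>) \<subseteq> zball \<Omega> Ys x (\<xi>Y *\<^sub>R \<delta>)"
    and "\<And>i x \<delta>. i < length Ys \<Longrightarrow> zball \<Omega> Xs x (\<xi> *\<^sub>R \<delta>) \<subseteq> zball \<Omega> Xs x (\<xi>I i *\<^sub>R \<delta>)"
proof -
  have deg: "\<forall>l<length Xs. is_degree (snd (Xs ! l))"
    using assms(2) by (auto simp: case_prod_beta)
  obtain s where "0 < s" and small: "\<And>r. 0 < r \<Longrightarrow> r < s \<Longrightarrow> r < 1 \<and>
      (\<forall>l<length Xs. real (length Xs) * (degpow (vec r) (snd (Xs ! l)))\<^sup>2 \<le> 1)"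
    using eventually_rescale_small[OF deg] unfolding eventually_at_right_field by auto
  define \<xi>0 where "\<xi>0 = Min (insert \<xi>Y (\<xi>I ` {..<length Ys}))"
  define \<xi> where "\<xi> = s / 2 * \<xi>0"
  have "0 < \<xi>0"
    using Y I unfolding \<xi>0_def control_nbhd_def by (subst Min_gr_iff) auto
  then have "0 < \<xi>" using \<open>0 < s\<close> by (simp add: \<xi>_def)
  have \<xi>0_le: "\<xi>0 \<le> \<xi>Y" "\<And>i. i < length Ys \<Longrightarrow> \<xi>0 \<le> \<xi>I i"
    unfolding \<xi>0_def by (auto intro: Min_le)
  have ratio: "0 < \<xi> / \<eta> \<and> \<xi> / \<eta> < s \<and> \<xi> *\<^sub>R \<delta> = (\<xi> / \<eta>) *\<^sub>R (\<eta> *\<^sub>R \<delta>)"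
    if "\<xi>0 \<le> \<eta>" for \<eta> and \<delta> :: "real^'v"
    using that \<open>0 < \<xi>0\<close> \<open>0 < s\<close> \<open>0 < \<xi>\<close> by (auto simp: \<xi>_def field_simps)
  have shrink: "zball \<Omega> Xs x (\<xi> *\<^sub>R \<delta>) \<subseteq> zball \<Omega> Zs x (\<eta> *\<^sub>R \<delta>)"
    if "\<xi>0 \<le> \<eta>" "\<forall>l<length Xs. \<tau> l < length Zs \<and> Zs ! \<tau> l = Xs ! l" for Zs \<tau> \<eta> x \<delta>
    using ratio[OF that(1)] small zball_rescale_subset[OF that(2)] by metis
  have "control_nbhd \<Omega> Xs (UY \<inter> (\<Inter>i<length Ys. UI i)) \<xi>"
    unfolding control_nbhd_def
  proof (intro conjI ballI)
    show "open (UY \<inter> (\<Inter>i<length Ys. UI i))" "0 \<in> UY \<inter> (\<Inter>i<length Ys. UI i)"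
      "UY \<inter> (\<Inter>i<length Ys. UI i) \<subseteq> \<Omega>"
      using Y I unfolding control_nbhd_def by auto
    fix x assume "x \<in> UY \<inter> (\<Inter>i<length Ys. UI i)"
    then have "ode_solvable \<Omega> Xs x (vec (\<xi>I 0))"
      using I \<open>Ys \<noteq> []\<close> unfolding control_nbhd_def by auto
    moreover have "vec \<xi> = (\<xi> / \<xi>I 0) *\<^sub>R vec (\<xi>I 0)"
      using \<open>0 < \<xi>0\<close> \<xi>0_le(2)[of 0] \<open>Ys \<noteq> []\<close> by (simp add: vec_eq_iff)
    ultimately show "ode_solvable \<Omega> Xs x (vec \<xi>)"
      using ratio[OF \<xi>0_le(2)] small deg \<open>Ys \<noteq> []\<close>
      by (metis ode_solvable_rescale degpow_vec_le_1 less_imp_le length_greater_0_conv)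
  qed (use \<open>0 < \<xi>\<close> in simp)
  moreover have "zball \<Omega> Xs x (\<xi> *\<^sub>R \<delta>) \<subseteq> zball \<Omega> Ys x (\<xi>Y *\<^sub>R \<delta>)" for x \<delta>
    by (rule shrink[OF \<xi>0_le(1) \<sigma>])
  moreover have "zball \<Omega> Xs x (\<xi> *\<^sub>R \<delta>) \<subseteq> zball \<Omega> Xs x (\<xi>I i *\<^sub>R \<delta>)"
    if "i < length Ys" for i x \<delta>
    by (rule shrink[of _ "\<lambda>l. l" Xs]) (simp_all add: \<xi>0_le(2)[OF that])
  ultimately show ?thesis by (rule that)
qed

section \<open>The Leibniz rule along words\<close>

fun splits :: "'a list \<Rightarrow> ('a list \<times> 'a list) list" where
  "splits [] = [([], [])]"
| "splits (j # \<beta>) = map (\<lambda>(a, b). (j # a, b)) (splits \<beta>) @ map (\<lambda>(a, b). (a, j # b)) (splits \<beta>)"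

lemma set_splits_subset: "(a, b) \<in> set (splits \<beta>) \<Longrightarrow> set a \<subseteq> set \<beta> \<and> set b \<subseteq> set \<beta>"
  by (induction \<beta> arbitrary: a b) fastforce+

lemma length_splits_add: "(a, b) \<in> set (splits \<beta>) \<Longrightarrow> length a + length b = length \<beta>"
  by (induction \<beta> arbitrary: a b) fastforce+

lemma length_splits: "length (splits \<beta>) = 2 ^ length \<beta>"
  by (induction \<beta>) auto

definition leibniz :: "('a list \<Rightarrow> 'p \<Rightarrow> real) \<Rightarrow> ('a list \<Rightarrow> 'p \<Rightarrow> real) \<Rightarrow> 'a list \<Rightarrow> 'p \<Rightarrow> real" where
  "leibniz F G \<beta> y = (\<Sum>(a, b)\<leftarrow>splits \<beta>. F a y * G b y)"

lemma leibniz_Nil: "leibniz F G [] y = F [] y * G [] y"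
  by (simp add: leibniz_def)

lemma leibniz_Cons:
  "leibniz F G (j # \<beta>) y = (\<Sum>(a, b)\<leftarrow>splits \<beta>. F (j # a) y * G b y + F a y * G (j # b) y)"
  by (simp add: leibniz_def o_def case_prod_beta' sum_list_addf)

lemma lie_deriv_on_subset: "S \<subseteq> T \<Longrightarrow> lie_deriv_on T V f g \<Longrightarrow> lie_deriv_on S V f g"
  unfolding lie_deriv_on_def by blast

lemma lie_deriv_on_const: "lie_deriv_on S V (\<lambda>_. c) (\<lambda>_. 0)"
  unfolding lie_deriv_on_def by auto

lemma lie_deriv_on_add:
  assumes "lie_deriv_on S V f f'" and "lie_deriv_on S V g g'"
  shows "lie_deriv_on S V (\<lambda>y. f y + g y) (\<lambda>y. f' y + g' y)"
  unfolding lie_deriv_on_def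
proof (intro ballI allI impI)
  fix y \<gamma> and \<epsilon> :: real
  assume "y \<in> S" and "0 < \<epsilon> \<and> \<gamma> 0 = y \<and>
    (\<forall>s\<in>{-\<epsilon><..<\<epsilon>}. (\<gamma> has_vector_derivative V (\<gamma> s)) (at s))"
  then have "((\<lambda>s. f (\<gamma> s)) has_real_derivative f' y) (at 0)"
    and "((\<lambda>s. g (\<gamma> s)) has_real_derivative g' y) (at 0)"
    using assms unfolding lie_deriv_on_def by blast+
  from DERIV_add[OF this] show "((\<lambda>s. f (\<gamma> s) + g (\<gamma> s)) has_real_derivative f' y + g' y) (at 0)" .
qed

lemma lie_deriv_on_mult:
  assumes "lie_deriv_on S V f f'" and "lie_deriv_on S V g g'"
  shows "lie_deriv_on S V (\<lambda>y. f y * g y) (\<lambda>y. f' y * g y + f y * g' y)"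
  unfolding lie_deriv_on_def
proof (intro ballI allI impI)
  fix y \<gamma> and \<epsilon> :: real
  assume "y \<in> S" and curve: "0 < \<epsilon> \<and> \<gamma> 0 = y \<and>
    (\<forall>s\<in>{-\<epsilon><..<\<epsilon>}. (\<gamma> has_vector_derivative V (\<gamma> s)) (at s))"
  then have "((\<lambda>s. f (\<gamma> s)) has_real_derivative f' y) (at 0)"
    and "((\<lambda>s. g (\<gamma> s)) has_real_derivative g' y) (at 0)"
    using assms unfolding lie_deriv_on_def by blast+
  from DERIV_mult[OF this] show "((\<lambda>s. f (\<gamma> s) * g (\<gamma> s)) has_real_derivative f' y * g y + f y * g' y) (at 0)"
    using curve by (simp add: algebra_simps)
qed

lemma lie_deriv_on_sum_list:
  "\<forall>x\<in>set xs. lie_deriv_on S V (f x) (f' x) \<Longrightarrow>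
   lie_deriv_on S V (\<lambda>y. \<Sum>x\<leftarrow>xs. f x y) (\<lambda>y. \<Sum>x\<leftarrow>xs. f' x y)"
  by (induction xs) (auto intro: lie_deriv_on_const lie_deriv_on_add)

lemma lie_deriv_on_sum:
  "finite I \<Longrightarrow> \<forall>i\<in>I. lie_deriv_on S V (f i) (f' i) \<Longrightarrow>
   lie_deriv_on S V (\<lambda>y. \<Sum>i\<in>I. f i y) (\<lambda>y. \<Sum>i\<in>I. f' i y)"
  by (induction I rule: finite_induct) (auto intro: lie_deriv_on_const lie_deriv_on_add)

definition lie_tower :: "(real^'n) set \<Rightarrow> nat \<Rightarrow> (nat \<Rightarrow> real^'n \<Rightarrow> real^'n) \<Rightarrow>
    (nat list \<Rightarrow> real^'n \<Rightarrow> real) \<Rightarrow> bool" where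
  "lie_tower S L V F \<longleftrightarrow>
     (\<forall>\<beta> j. set \<beta> \<subseteq> {..<L} \<and> j < L \<longrightarrow> lie_deriv_on S (V j) (F \<beta>) (F (j # \<beta>)))"

lemma lie_tower_subset: "S \<subseteq> T \<Longrightarrow> lie_tower T L V F \<Longrightarrow> lie_tower S L V F"
  unfolding lie_tower_def by (blast intro: lie_deriv_on_subset)

lemma lie_tower_reindex:
  assumes "lie_tower S M W F" and "\<forall>j<L. \<sigma> j < M \<and> W (\<sigma> j) = V j"
  shows "lie_tower S L V (\<lambda>\<beta>. F (map \<sigma> \<beta>))"
  unfolding lie_tower_def
proof (intro allI impI)
  fix \<beta> j assume "set \<beta> \<subseteq> {..<L} \<and> j < L"
  then have "set (map \<sigma> \<beta>) \<subseteq> {..<M} \<and> \<sigma> j < M" and "W (\<sigma> j) = V j"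
    using assms(2) by auto
  with assms(1) show "lie_deriv_on S (V j) (F (map \<sigma> \<beta>)) (F (map \<sigma> (j # \<beta>)))"
    unfolding lie_tower_def by fastforce
qed

lemma lie_tower_sum:
  "finite I \<Longrightarrow> \<forall>i\<in>I. lie_tower S L V (F i) \<Longrightarrow> lie_tower S L V (\<lambda>\<beta> y. \<Sum>i\<in>I. F i \<beta> y)"
  unfolding lie_tower_def by (auto intro: lie_deriv_on_sum)

lemma lie_tower_leibniz:
  assumes F: "lie_tower S L V F" and G: "lie_tower S L V G"
  shows "lie_tower S L V (leibniz F G)"
  unfolding lie_tower_def
proof (intro allI impI)
  fix \<beta> j assume \<beta>: "set \<beta> \<subseteq> {..<L} \<and> j < L"
  have "lie_deriv_on S (V j) (\<lambda>y. \<Sum>(a, b)\<leftarrow>splits \<beta>. F a y * G b y)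
      (\<lambda>y. \<Sum>(a, b)\<leftarrow>splits \<beta>. F (j # a) y * G b y + F a y * G (j # b) y)"
    unfolding case_prod_beta'
  proof (rule lie_deriv_on_sum_list, intro ballI lie_deriv_on_mult)
    fix ab assume "ab \<in> set (splits \<beta>)"
    then have "set (fst ab) \<subseteq> {..<L}" "set (snd ab) \<subseteq> {..<L}"
      using set_splits_subset[of "fst ab" "snd ab" \<beta>] \<beta> by auto
    then show "lie_deriv_on S (V j) (F (fst ab)) (F (j # fst ab))"
      and "lie_deriv_on S (V j) (G (snd ab)) (G (j # snd ab))"
      using F G \<beta> unfolding lie_tower_def by blast+
  qed
  then show "lie_deriv_on S (V j) (leibniz F G \<beta>) (leibniz F G (j # \<beta>))"
    unfolding leibniz_Cons by (simp add: leibniz_def[abs_def])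
qed

lemma continuous_on_sum_list:
  fixes f :: "'i \<Rightarrow> 'a::topological_space \<Rightarrow> real"
  shows "\<forall>x\<in>set xs. continuous_on S (f x) \<Longrightarrow> continuous_on S (\<lambda>y. \<Sum>x\<leftarrow>xs. f x y)"
  by (induction xs) (auto intro: continuous_intros)

lemma has_real_derivative_sum_list:
  "\<forall>x\<in>set xs. (f x has_real_derivative f' x) F \<Longrightarrow>
   ((\<lambda>s. \<Sum>x\<leftarrow>xs. f x s) has_real_derivative (\<Sum>x\<leftarrow>xs. f' x)) F"
  by (induction xs) (auto intro!: derivative_eq_intros)

lemma continuous_on_leibniz:
  assumes "\<And>a. set a \<subseteq> A \<Longrightarrow> continuous_on S (F a)"
    and "\<And>b. set b \<subseteq> A \<Longrightarrow> continuous_on S (G b)"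
    and "set \<beta> \<subseteq> A"
  shows "continuous_on S (leibniz F G \<beta>)"
proof -
  have "continuous_on S (\<lambda>y. \<Sum>ab\<leftarrow>splits \<beta>. F (fst ab) y * G (snd ab) y)"
  proof (intro continuous_on_sum_list ballI continuous_on_mult)
    fix ab assume "ab \<in> set (splits \<beta>)"
    then have "set (fst ab) \<subseteq> A" "set (snd ab) \<subseteq> A"
      using set_splits_subset[of "fst ab" "snd ab" \<beta>] assms(3) by auto
    then show "continuous_on S (F (fst ab))" "continuous_on S (G (snd ab))"
      using assms(1,2) by auto
  qed
  then show ?thesis by (simp add: leibniz_def[abs_def] case_prod_beta')
qed

lemma abs_leibniz_le:
  assumes "\<And>a. set a \<subseteq> set \<beta> \<Longrightarrow> length a \<le> length \<beta> \<Longrightarrow> \<bar>F a y\<bar> \<le> C"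
    and "\<And>b. set b \<subseteq> set \<beta> \<Longrightarrow> length b \<le> length \<beta> \<Longrightarrow> \<bar>G b y\<bar> \<le> D"
  shows "\<bar>leibniz F G \<beta> y\<bar> \<le> 2 ^ length \<beta> * (C * D)"
proof -
  have bounds: "\<bar>F a y\<bar> \<le> C" "\<bar>G b y\<bar> \<le> D" if "(a, b) \<in> set (splits \<beta>)" for a b
    using assms set_splits_subset[OF that] length_splits_add[OF that] by auto
  have "0 \<le> C"
    using assms(1)[of "[]"] by (auto intro: order_trans[OF abs_ge_zero])
  have "\<bar>leibniz F G \<beta> y\<bar> \<le> (\<Sum>(a, b)\<leftarrow>splits \<beta>. \<bar>F a y * G b y\<bar>)"
    unfolding leibniz_def case_prod_beta'
    using sum_list_abs[of "map (\<lambda>ab. F (fst ab) y * G (snd ab) y) (splits \<beta>)"] by (simp add: o_def)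
  also have "\<dots> \<le> (\<Sum>(a, b)\<leftarrow>splits \<beta>. C * D)"
    unfolding case_prod_beta' abs_mult using bounds
    by (intro sum_list_mono mult_mono) (auto simp: \<open>0 \<le> C\<close>)
  also have "\<dots> = 2 ^ length \<beta> * (C * D)"
    by (simp add: case_prod_beta' sum_list_triv length_splits)
  finally show ?thesis .
qed

lemma abs_sum_leibniz_le:
  assumes "\<And>i a. i < n \<Longrightarrow> set a \<subseteq> set \<beta> \<Longrightarrow> length a \<le> length \<beta> \<Longrightarrow> \<bar>F i a y\<bar> \<le> C"
    and "\<And>i b. i < n \<Longrightarrow> set b \<subseteq> set \<beta> \<Longrightarrow> length b \<le> length \<beta> \<Longrightarrow> \<bar>G i b y\<bar> \<le> D i"
    and "length \<beta> \<le> m"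
  shows "\<bar>\<Sum>i<n. leibniz (F i) (G i) \<beta> y\<bar> \<le> (\<Sum>i<n. 2 ^ m * (C * D i))"
proof -
  have nonneg: "0 \<le> C * D i" if "i < n" for i
    using assms(1,2)[OF that, of "[]"] by (auto intro: order_trans[OF abs_ge_zero])
  have "\<bar>\<Sum>i<n. leibniz (F i) (G i) \<beta> y\<bar> \<le> (\<Sum>i<n. \<bar>leibniz (F i) (G i) \<beta> y\<bar>)"
    by (rule sum_abs)
  also have "\<dots> \<le> (\<Sum>i<n. 2 ^ length \<beta> * (C * D i))"
    using assms(1,2) by (intro sum_mono abs_leibniz_le) auto
  also have "\<dots> \<le> (\<Sum>i<n. 2 ^ m * (C * D i))"
    using nonneg assms(3) by (intro sum_mono mult_right_mono power_increasing) auto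
  finally show ?thesis .
qed

lemma leibniz_has_real_derivative:
  assumes "\<And>a. set a \<subseteq> A \<Longrightarrow> ((\<lambda>s. F s a y) has_real_derivative F' a y) (at 0)"
    and "set \<beta> \<subseteq> A"
  shows "((\<lambda>s. leibniz (F s) G \<beta> y) has_real_derivative leibniz F' G \<beta> y) (at 0)"
  unfolding leibniz_def case_prod_beta'
proof (intro has_real_derivative_sum_list ballI DERIV_cmult_right)
  fix ab assume "ab \<in> set (splits \<beta>)"
  then have "set (fst ab) \<subseteq> A"
    using set_splits_subset[of "fst ab" "snd ab" \<beta>] assms(2) by auto
  with assms(1) show "((\<lambda>s. F s (fst ab) y) has_real_derivative F' (fst ab) y) (at 0)" .
qed

section \<open>Re-expansion\<close>

definition expansion_on :: "(real^'n) set \<Rightarrow> ((real^'n \<Rightarrow> real^'n) \<times> (real^'v)) list \<Rightarrow> real^'v \<Rightarrow>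
    (real^'n \<Rightarrow> real^'n) \<Rightarrow> (nat \<Rightarrow> real^'n \<Rightarrow> real) \<Rightarrow> (nat \<Rightarrow> nat list \<Rightarrow> real^'n \<Rightarrow> real) \<Rightarrow> bool"
  where
  "expansion_on B Zs \<delta> T c G \<longleftrightarrow>
     (\<forall>y\<in>B. T y = (\<Sum>l<length Zs. c l y *\<^sub>R sfield \<delta> (Zs ! l) y)) \<and>
     (\<forall>l<length Zs. (\<forall>y\<in>B. G l [] y = c l y) \<and>
        lie_tower B (length Zs) (\<lambda>j. sfield \<delta> (Zs ! j)) (G l))"

lemma expansion_on_compose:
  assumes \<sigma>: "\<forall>l<length Xs. \<sigma> l < length Ys \<and> Ys ! \<sigma> l = Xs ! l"
    and Y: "expansion_on BY Ys \<delta> T cY GY"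
    and I: "\<forall>i<length Ys. expansion_on (BI i) Xs \<delta> (sfield \<delta> (Ys ! i)) (cI i) (GI i)"
    and "B \<subseteq> BY" and "\<forall>i<length Ys. B \<subseteq> BI i"
  shows "expansion_on B Xs \<delta> T (\<lambda>l y. \<Sum>i<length Ys. cY i y * cI i l y)
           (\<lambda>l \<beta> y. \<Sum>i<length Ys. leibniz (\<lambda>a. GY i (map \<sigma> a)) (GI i l) \<beta> y)"
proof -
  have Yrep: "\<And>y. y \<in> BY \<Longrightarrow> T y = (\<Sum>i<length Ys. cY i y *\<^sub>R sfield \<delta> (Ys ! i) y)"
    and YG0: "\<And>i y. i < length Ys \<Longrightarrow> y \<in> BY \<Longrightarrow> GY i [] y = cY i y"
    and Ytower: "\<And>i. i < length Ys \<Longrightarrow> lie_tower BY (length Ys) (\<lambda>j. sfield \<delta> (Ys ! j)) (GY i)"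
    using Y unfolding expansion_on_def by simp_all
  have Irep: "\<And>i y. i < length Ys \<Longrightarrow> y \<in> BI i \<Longrightarrow>
        sfield \<delta> (Ys ! i) y = (\<Sum>l<length Xs. cI i l y *\<^sub>R sfield \<delta> (Xs ! l) y)"
    and IG0: "\<And>i l y. i < length Ys \<Longrightarrow> l < length Xs \<Longrightarrow> y \<in> BI i \<Longrightarrow> GI i l [] y = cI i l y"
    and Itower: "\<And>i l. i < length Ys \<Longrightarrow> l < length Xs \<Longrightarrow>
        lie_tower (BI i) (length Xs) (\<lambda>j. sfield \<delta> (Xs ! j)) (GI i l)"
    using I unfolding expansion_on_def by simp_all
  show ?thesis
    unfolding expansion_on_def
  proof (intro conjI ballI allI impI)
    fix y assume "y \<in> B"
    then have "T y = (\<Sum>i<length Ys. cY i y *\<^sub>R sfield \<delta> (Ys ! i) y)"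
      using Yrep \<open>B \<subseteq> BY\<close> by blast
    also have "\<dots> = (\<Sum>i<length Ys. cY i y *\<^sub>R (\<Sum>l<length Xs. cI i l y *\<^sub>R sfield \<delta> (Xs ! l) y))"
      using Irep \<open>y \<in> B\<close> \<open>\<forall>i<length Ys. B \<subseteq> BI i\<close> by (intro sum.cong refl) auto
    finally show "T y = (\<Sum>l<length Xs. (\<Sum>i<length Ys. cY i y * cI i l y) *\<^sub>R sfield \<delta> (Xs ! l) y)"
      by (simp add: scaleR_sum_right scaleR_sum_left sum.swap[of _ "{..<length Xs}"])
  next
    fix l y assume "l < length Xs" and "y \<in> B"
    then show "(\<Sum>i<length Ys. leibniz (\<lambda>a. GY i (map \<sigma> a)) (GI i l) [] y) =
        (\<Sum>i<length Ys. cY i y * cI i l y)"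
      using YG0 IG0 \<open>B \<subseteq> BY\<close> \<open>\<forall>i<length Ys. B \<subseteq> BI i\<close>
      unfolding leibniz_Nil list.map by (intro sum.cong refl) (simp add: subset_iff)
  next
    fix l assume "l < length Xs"
    have "lie_tower B (length Xs) (\<lambda>j. sfield \<delta> (Xs ! j)) (\<lambda>a. GY i (map \<sigma> a))"
      if "i < length Ys" for i
      using Ytower[OF that] \<sigma> by (intro lie_tower_subset[OF \<open>B \<subseteq> BY\<close>] lie_tower_reindex) auto
    moreover have "lie_tower B (length Xs) (\<lambda>j. sfield \<delta> (Xs ! j)) (GI i l)"
      if "i < length Ys" for i
      using Itower[OF that \<open>l < length Xs\<close>] \<open>\<forall>i<length Ys. B \<subseteq> BI i\<close> that
      by (blast intro: lie_tower_subset)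
    ultimately show "lie_tower B (length Xs) (\<lambda>j. sfield \<delta> (Xs ! j))
        (\<lambda>\<beta> y. \<Sum>i<length Ys. leibniz (\<lambda>a. GY i (map \<sigma> a)) (GI i l) \<beta> y)"
      by (intro lie_tower_sum ballI lie_tower_leibniz) auto
  qed
qed

lemma sfield_Pair: "sfield \<delta> (Z, D) = (\<lambda>y. degpow \<delta> D *\<^sub>R Z y)"
  by (simp add: sfield_def)

definition controls_vf_with :: "(real^'n) set \<Rightarrow> ((real^'n \<Rightarrow> real^'n) \<times> (real^'v)) list \<Rightarrow>
    (real^'n \<Rightarrow> real^'n) \<Rightarrow> real^'v \<Rightarrow> (real^'n) set \<Rightarrow> real \<Rightarrow>
    (real^'n \<Rightarrow> real^'v \<Rightarrow> nat \<Rightarrow> real^'n \<Rightarrow> real) \<Rightarrow>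
    (real^'n \<Rightarrow> real^'v \<Rightarrow> nat \<Rightarrow> nat list \<Rightarrow> real^'n \<Rightarrow> real) \<Rightarrow> (nat \<Rightarrow> real) \<Rightarrow> bool" where
  "controls_vf_with \<Omega> Zs X0 d0 U \<xi> c G C \<longleftrightarrow> control_nbhd \<Omega> Zs U \<xi> \<and>
     (\<forall>x\<in>U. \<forall>\<delta>\<in>unit_cube.
        expansion_on (zball \<Omega> Zs x (\<xi> *\<^sub>R \<delta>)) Zs \<delta> (sfield \<delta> (X0, d0)) (c x \<delta>) (G x \<delta>)) \<and>
     (\<forall>x\<in>U. \<forall>\<delta>\<in>unit_cube. \<forall>l<length Zs. \<forall>\<beta>. set \<beta> \<subseteq> {..<length Zs} \<longrightarrow>
        continuous_on (zball \<Omega> Zs x (\<xi> *\<^sub>R \<delta>)) (G x \<delta> l \<beta>)) \<and>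
     (\<forall>m. \<forall>x\<in>U. \<forall>\<delta>\<in>unit_cube. \<forall>l<length Zs. \<forall>\<beta>.
        set \<beta> \<subseteq> {..<length Zs} \<and> length \<beta> \<le> m \<longrightarrow>
        (\<forall>y\<in>zball \<Omega> Zs x (\<xi> *\<^sub>R \<delta>). \<bar>G x \<delta> l \<beta> y\<bar> \<le> C m))"

lemma controls_vf_iff:
  "controls_vf \<Omega> Zs X0 d0 \<longleftrightarrow> (\<exists>U \<xi> c G C. controls_vf_with \<Omega> Zs X0 d0 U \<xi> c G C)"
  unfolding controls_vf_def controls_vf_with_def control_nbhd_def expansion_on_def lie_tower_def
    sfield_Pair
  by (simp add: choice_iff all_conj_distrib imp_conjR ball_conj_distrib conj_assoc)

lemma ball_expansion_on_iff:
  "(\<forall>t\<in>A. expansion_on B Zs \<delta> (T t) (c t) (G t)) \<longleftrightarrow>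
     (\<forall>t\<in>A. \<forall>y\<in>B. T t y = (\<Sum>l<length Zs. c t l y *\<^sub>R sfield \<delta> (Zs ! l) y)) \<and>
     (\<forall>l<length Zs. (\<forall>t\<in>A. \<forall>y\<in>B. G t l [] y = c t l y) \<and>
        (\<forall>\<beta> j. set \<beta> \<subseteq> {..<length Zs} \<and> j < length Zs \<longrightarrow>
           (\<forall>t\<in>A. lie_deriv_on B (sfield \<delta> (Zs ! j)) (G t l \<beta>) (G t l (j # \<beta>)))))"
  unfolding expansion_on_def lie_tower_def by blast

definition controls_W_with :: "(real^'n) set \<Rightarrow> ((real^'n \<Rightarrow> real^'n) \<times> (real^'v)) list \<Rightarrow>
    ('k \<Rightarrow> real^'v) \<Rightarrow> ((real^'k) \<times> (real^'n) \<Rightarrow> real^'n) \<Rightarrow> real \<Rightarrow> (real^'n) set \<Rightarrow> real \<Rightarrow>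
    (real^'n \<Rightarrow> real^'v \<Rightarrow> nat \<Rightarrow> real^'k \<Rightarrow> real^'n \<Rightarrow> real) \<Rightarrow>
    (real^'n \<Rightarrow> real^'v \<Rightarrow> nat \<Rightarrow> ('k \<Rightarrow> nat) \<Rightarrow> nat list \<Rightarrow> real^'k \<Rightarrow> real^'n \<Rightarrow> real) \<Rightarrow>
    (nat \<Rightarrow> real) \<Rightarrow> bool"
  where
  "controls_W_with \<Omega> Zs e W \<rho> U \<xi> c H C \<longleftrightarrow> 0 < \<rho> \<and> control_nbhd \<Omega> Zs U \<xi> \<and>
     (\<forall>x\<in>U. \<forall>\<delta>\<in>unit_cube. \<forall>t\<in>ball 0 \<rho>.
        expansion_on (zball \<Omega> Zs x (\<xi> *\<^sub>R \<delta>)) Zs \<delta> (\<lambda>u. W (tscale e \<delta> t, u))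
          (\<lambda>l. c x \<delta> l t) (\<lambda>l \<beta>. H x \<delta> l (\<lambda>_. 0) \<beta> t)) \<and>
     (\<forall>x\<in>U. \<forall>\<delta>\<in>unit_cube. \<forall>l<length Zs. \<forall>\<alpha> \<beta> i. set \<beta> \<subseteq> {..<length Zs} \<longrightarrow>
        (\<forall>t\<in>ball 0 \<rho>. \<forall>u\<in>zball \<Omega> Zs x (\<xi> *\<^sub>R \<delta>).
           ((\<lambda>s. H x \<delta> l \<alpha> \<beta> (t + s *\<^sub>R axis i 1) u) has_real_derivative
              H x \<delta> l (\<alpha>(i := Suc (\<alpha> i))) \<beta> t u) (at 0))) \<and>
     (\<forall>x\<in>U. \<forall>\<delta>\<in>unit_cube. \<forall>l<length Zs. \<forall>\<alpha> \<beta>. set \<beta> \<subseteq> {..<length Zs} \<longrightarrow>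
        continuous_on (ball 0 \<rho> \<times> zball \<Omega> Zs x (\<xi> *\<^sub>R \<delta>)) (\<lambda>p. H x \<delta> l \<alpha> \<beta> (fst p) (snd p))) \<and>
     (\<forall>m. \<forall>x\<in>U. \<forall>\<delta>\<in>unit_cube. \<forall>l<length Zs. \<forall>\<alpha> \<beta>.
        set \<beta> \<subseteq> {..<length Zs} \<and> sum \<alpha> UNIV + length \<beta> \<le> m \<longrightarrow>
        (\<forall>t\<in>ball 0 \<rho>. \<forall>u\<in>zball \<Omega> Zs x (\<xi> *\<^sub>R \<delta>). \<bar>H x \<delta> l \<alpha> \<beta> t u\<bar> \<le> C m))"

lemma controls_W_iff:
  "controls_W \<Omega> Zs e W \<longleftrightarrow> (\<exists>\<rho> U \<xi> c H C. controls_W_with \<Omega> Zs e W \<rho> U \<xi> c H C)"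
  unfolding controls_W_def controls_W_with_def control_nbhd_def ball_expansion_on_iff
  by (simp add: choice_iff all_conj_distrib imp_conjR ball_conj_distrib conj_assoc)

lemma set_subset_nth_reindex:
  assumes "set xs \<subseteq> set ys"
  obtains \<sigma> where "\<forall>l<length xs. \<sigma> l < length ys \<and> ys ! \<sigma> l = xs ! l"
proof -
  have "\<forall>l\<in>{..<length xs}. \<exists>i. i < length ys \<and> ys ! i = xs ! l"
    using assms by (auto simp: in_set_conv_nth[symmetric])
  then show ?thesis
    using that by (auto simp: bchoice_iff)
qed

lemma controls_vf_listE:
  assumes "\<forall>(Z, D)\<in>set Ys. controls_vf \<Omega> Xs Z D"
  obtains UI \<xi>I cI GI CI where "\<And>i. i < length Ys \<Longrightarrow>
    controls_vf_with \<Omega> Xs (fst (Ys ! i)) (snd (Ys ! i)) (UI i) (\<xi>I i) (cI i) (GI i) (CI i)"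
proof -
  have "\<forall>i<length Ys. controls_vf \<Omega> Xs (fst (Ys ! i)) (snd (Ys ! i))"
    using assms by (auto simp: case_prod_beta)
  then show ?thesis
    unfolding controls_vf_iff choice_iff' by (elim exE) (blast intro: that)
qed

locale reexpansion =
  fixes \<Omega> :: "(real^'n) set" and Xs Ys :: "((real^'n \<Rightarrow> real^'n) \<times> (real^'v)) list"
    and \<sigma> :: "nat \<Rightarrow> nat" and UI :: "nat \<Rightarrow> (real^'n) set" and \<xi>I :: "nat \<Rightarrow> real"
    and cI :: "nat \<Rightarrow> real^'n \<Rightarrow> real^'v \<Rightarrow> nat \<Rightarrow> real^'n \<Rightarrow> real"
    and GI :: "nat \<Rightarrow> real^'n \<Rightarrow> real^'v \<Rightarrow> nat \<Rightarrow> nat list \<Rightarrow> real^'n \<Rightarrow> real"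
    and CI :: "nat \<Rightarrow> nat \<Rightarrow> real" and \<xi> \<xi>Y :: real
  assumes reindex: "\<forall>l<length Xs. \<sigma> l < length Ys \<and> Ys ! \<sigma> l = Xs ! l"
    and controls_Ys: "\<And>i. i < length Ys \<Longrightarrow>
      controls_vf_with \<Omega> Xs (fst (Ys ! i)) (snd (Ys ! i)) (UI i) (\<xi>I i) (cI i) (GI i) (CI i)"
    and zball_subset_Ys: "\<And>x \<delta>. zball \<Omega> Xs x (\<xi> *\<^sub>R \<delta>) \<subseteq> zball \<Omega> Ys x (\<xi>Y *\<^sub>R \<delta>)"
    and zball_subset_UI: "\<And>i x \<delta>. i < length Ys \<Longrightarrow> zball \<Omega> Xs x (\<xi> *\<^sub>R \<delta>) \<subseteq> zball \<Omega> Xs x (\<xi>I i *\<^sub>R \<delta>)"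
begin

text \<open>The derivatives along the \<open>X\<close>-word \<open>\<beta>\<close> of the re-expanded coefficient
  \<open>\<Sum>\<^sub>i c\<^sub>i c\<^sub>i\<^sub>l\<close>: in the factor \<open>c\<^sub>i\<close> the word is read as the \<open>Y\<close>-word \<open>map \<sigma> \<beta>\<close>.\<close>

definition composed_tower :: "(nat \<Rightarrow> nat list \<Rightarrow> real^'n \<Rightarrow> real) \<Rightarrow> real^'n \<Rightarrow> real^'v \<Rightarrow>
    nat \<Rightarrow> nat list \<Rightarrow> real^'n \<Rightarrow> real" where
  "composed_tower F x \<delta> l \<beta> y = (\<Sum>i<length Ys. leibniz (\<lambda>a. F i (map \<sigma> a)) (GI i x \<delta> l) \<beta> y)"

lemma set_map_reindex: "set a \<subseteq> {..<length Xs} \<Longrightarrow> set (map \<sigma> a) \<subseteq> {..<length Ys}"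
  using reindex by auto

lemma composed_expansion:
  assumes "x \<in> (\<Inter>i<length Ys. UI i)" and "\<delta> \<in> unit_cube"
    and "expansion_on (zball \<Omega> Ys x (\<xi>Y *\<^sub>R \<delta>)) Ys \<delta> T c F"
  shows "expansion_on (zball \<Omega> Xs x (\<xi> *\<^sub>R \<delta>)) Xs \<delta> T
           (\<lambda>l y. \<Sum>i<length Ys. c i y * cI i x \<delta> l y) (composed_tower F x \<delta>)"
proof -
  have "\<forall>i<length Ys. expansion_on (zball \<Omega> Xs x (\<xi>I i *\<^sub>R \<delta>)) Xs \<delta> (sfield \<delta> (Ys ! i)) (cI i x \<delta>) (GI i x \<delta>)"
    using controls_Ys assms(1,2) unfolding controls_vf_with_def by simp
  then show ?thesis
    unfolding composed_tower_def[abs_def]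
    by (rule expansion_on_compose[OF reindex assms(3)]) (use zball_subset_Ys zball_subset_UI in auto)
qed

lemma composed_continuous_on:
  assumes "x \<in> (\<Inter>i<length Ys. UI i)" and "\<delta> \<in> unit_cube"
    and "l < length Xs" and "set \<beta> \<subseteq> {..<length Xs}"
    and "continuous_on S \<pi>" and "\<pi> ` S \<subseteq> zball \<Omega> Xs x (\<xi> *\<^sub>R \<delta>)"
    and "\<And>i a. i < length Ys \<Longrightarrow> set a \<subseteq> {..<length Ys} \<Longrightarrow> continuous_on S (\<lambda>p. F p i a (\<pi> p))"
  shows "continuous_on S (\<lambda>p. composed_tower (F p) x \<delta> l \<beta> (\<pi> p))"
proof -
  have "continuous_on S (\<lambda>p. GI i x \<delta> l b (\<pi> p))"
    if "i < length Ys" and "set b \<subseteq> {..<length Xs}" for i b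
  proof (rule continuous_on_compose2[OF _ assms(5)])
    show "continuous_on (zball \<Omega> Xs x (\<xi>I i *\<^sub>R \<delta>)) (GI i x \<delta> l b)"
      using controls_Ys[OF that(1)] that assms(1-3) unfolding controls_vf_with_def by blast
    show "\<pi> ` S \<subseteq> zball \<Omega> Xs x (\<xi>I i *\<^sub>R \<delta>)"
      using assms(6) zball_subset_UI[OF that(1)] by blast
  qed
  then have "continuous_on S (\<lambda>p. \<Sum>i<length Ys.
      leibniz (\<lambda>a p. F p i (map \<sigma> a) (\<pi> p)) (\<lambda>b p. GI i x \<delta> l b (\<pi> p)) \<beta> p)"
    using assms(4,7) set_map_reindex
    by (intro continuous_on_sum continuous_on_leibniz[where A="{..<length Xs}"]) auto
  then show ?thesis
    by (simp add: composed_tower_def leibniz_def)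
qed

lemma composed_has_real_derivative:
  assumes "set \<beta> \<subseteq> {..<length Xs}"
    and "\<And>i a. i < length Ys \<Longrightarrow> set a \<subseteq> {..<length Ys} \<Longrightarrow>
           ((\<lambda>s. F s i a y) has_real_derivative F' i a y) (at 0)"
  shows "((\<lambda>s. composed_tower (F s) x \<delta> l \<beta> y) has_real_derivative composed_tower F' x \<delta> l \<beta> y) (at 0)"
  unfolding composed_tower_def
  using assms set_map_reindex
  by (intro DERIV_sum leibniz_has_real_derivative[where A="{..<length Xs}"]) auto

lemma composed_bound:
  assumes "x \<in> (\<Inter>i<length Ys. UI i)" and "\<delta> \<in> unit_cube"
    and "l < length Xs" and "set \<beta> \<subseteq> {..<length Xs}" and "length \<beta> \<le> m"
    and "y \<in> zball \<Omega> Xs x (\<xi> *\<^sub>R \<delta>)"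
    and "\<And>i a. i < length Ys \<Longrightarrow> set a \<subseteq> {..<length Ys} \<Longrightarrow> length a \<le> length \<beta> \<Longrightarrow> \<bar>F i a y\<bar> \<le> C"
  shows "\<bar>composed_tower F x \<delta> l \<beta> y\<bar> \<le> (\<Sum>i<length Ys. 2 ^ m * (C * CI i m))"
  unfolding composed_tower_def
proof (rule abs_sum_leibniz_le)
  fix i a assume "i < length Ys" "set a \<subseteq> set \<beta>" "length a \<le> length \<beta>"
  then show "\<bar>F i (map \<sigma> a) y\<bar> \<le> C"
    using assms(4,7) set_map_reindex[of a] by auto
next
  fix i b assume "i < length Ys" "set b \<subseteq> set \<beta>" "length b \<le> length \<beta>"
  moreover have "y \<in> zball \<Omega> Xs x (\<xi>I i *\<^sub>R \<delta>)"
    using zball_subset_UI[OF \<open>i < length Ys\<close>] assms(6) by blast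
  ultimately show "\<bar>GI i x \<delta> l b y\<bar> \<le> CI i m"
    using controls_Ys[OF \<open>i < length Ys\<close>] assms(1-5) unfolding controls_vf_with_def by auto
qed (rule assms(5))

end

lemma obtain_reexpansion:
  fixes Xs Ys :: "((real^'n \<Rightarrow> real^'n) \<times> (real^'v)) list"
  assumes "set Xs \<subseteq> set Ys" and "Ys \<noteq> []" and "\<forall>(Z, D)\<in>set Xs. is_degree D"
    and "control_nbhd \<Omega> Ys UY \<xi>Y" and "\<forall>(Z, D)\<in>set Ys. controls_vf \<Omega> Xs Z D"
  obtains \<sigma> UI \<xi>I cI GI CI \<xi> where "reexpansion \<Omega> Xs Ys \<sigma> UI \<xi>I cI GI CI \<xi> \<xi>Y"
    and "control_nbhd \<Omega> Xs (UY \<inter> (\<Inter>i<length Ys. UI i)) \<xi>"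
proof -
  obtain \<sigma> where \<sigma>: "\<forall>l<length Xs. \<sigma> l < length Ys \<and> Ys ! \<sigma> l = Xs ! l"
    using assms(1) by (rule set_subset_nth_reindex)
  obtain UI \<xi>I cI GI CI where I: "\<And>i. i < length Ys \<Longrightarrow>
      controls_vf_with \<Omega> Xs (fst (Ys ! i)) (snd (Ys ! i)) (UI i) (\<xi>I i) (cI i) (GI i) (CI i)"
    by (rule controls_vf_listE[OF assms(5)]) blast
  obtain \<xi> where nbhd: "control_nbhd \<Omega> Xs (UY \<inter> (\<Inter>i<length Ys. UI i)) \<xi>"
    and "\<And>x \<delta>. zball \<Omega> Xs x (\<xi> *\<^sub>R \<delta>) \<subseteq> zball \<Omega> Ys x (\<xi>Y *\<^sub>R \<delta>)"
    and "\<And>i x \<delta>. i < length Ys \<Longrightarrow> zball \<Omega> Xs x (\<xi> *\<^sub>R \<delta>) \<subseteq> zball \<Omega> Xs x (\<xi>I i *\<^sub>R \<delta>)"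
    by (rule common_control_nbhd[OF \<sigma> assms(3,4) _ assms(2)])
       (use I in \<open>auto simp: controls_vf_with_def\<close>)
  then have "reexpansion \<Omega> Xs Ys \<sigma> UI \<xi>I cI GI CI \<xi> \<xi>Y"
    using \<sigma> I by unfold_locales
  from this nbhd show ?thesis
    by (rule that)
qed

lemma controls_vf_trans:
  fixes Xs Ys :: "((real^'n \<Rightarrow> real^'n) \<times> (real^'v)) list"
  assumes "set Xs \<subseteq> set Ys" and "Ys \<noteq> []" and "\<forall>(Z, D)\<in>set Xs. is_degree D"
    and "controls_vf \<Omega> Ys X0 d0" and "\<forall>(Z, D)\<in>set Ys. controls_vf \<Omega> Xs Z D"
  shows "controls_vf \<Omega> Xs X0 d0"
proof -
  obtain UY \<xi>Y cY GY CY where Y: "controls_vf_with \<Omega> Ys X0 d0 UY \<xi>Y cY GY CY"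
    using assms(4) unfolding controls_vf_iff by blast
  then have "control_nbhd \<Omega> Ys UY \<xi>Y"
    unfolding controls_vf_with_def by blast
  then obtain \<sigma> UI \<xi>I cI GI CI \<xi> where "reexpansion \<Omega> Xs Ys \<sigma> UI \<xi>I cI GI CI \<xi> \<xi>Y"
    and nbhd: "control_nbhd \<Omega> Xs (UY \<inter> (\<Inter>i<length Ys. UI i)) \<xi>"
    by (rule obtain_reexpansion[OF assms(1-3) _ assms(5)])
  then interpret reexpansion \<Omega> Xs Ys \<sigma> UI \<xi>I cI GI CI \<xi> \<xi>Y by simp
  have "controls_vf_with \<Omega> Xs X0 d0 (UY \<inter> (\<Inter>i<length Ys. UI i)) \<xi>
      (\<lambda>x \<delta> l y. \<Sum>i<length Ys. cY x \<delta> i y * cI i x \<delta> l y) (\<lambda>x \<delta>. composed_tower (GY x \<delta>) x \<delta>)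
      (\<lambda>m. \<Sum>i<length Ys. 2 ^ m * (CY m * CI i m))"
    unfolding controls_vf_with_def
  proof (intro conjI ballI allI impI nbhd)
    fix x and \<delta> :: "real^'v" assume "x \<in> UY \<inter> (\<Inter>i<length Ys. UI i)" and "\<delta> \<in> unit_cube"
    then show "expansion_on (zball \<Omega> Xs x (\<xi> *\<^sub>R \<delta>)) Xs \<delta> (sfield \<delta> (X0, d0))
        (\<lambda>l y. \<Sum>i<length Ys. cY x \<delta> i y * cI i x \<delta> l y) (composed_tower (GY x \<delta>) x \<delta>)"
      using Y unfolding controls_vf_with_def by (intro composed_expansion) auto
  next
    fix x and \<delta> :: "real^'v" and l \<beta>
    assume "x \<in> UY \<inter> (\<Inter>i<length Ys. UI i)" "\<delta> \<in> unit_cube" "l < length Xs" "set \<beta> \<subseteq> {..<length Xs}"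
    then show "continuous_on (zball \<Omega> Xs x (\<xi> *\<^sub>R \<delta>)) (composed_tower (GY x \<delta>) x \<delta> l \<beta>)"
      using Y unfolding controls_vf_with_def
      by (intro composed_continuous_on[where \<pi>="\<lambda>p. p"])
         (auto intro: continuous_on_subset[OF _ zball_subset_Ys])
  next
    fix m x and \<delta> :: "real^'v" and l \<beta> y
    assume "x \<in> UY \<inter> (\<Inter>i<length Ys. UI i)" "\<delta> \<in> unit_cube" "l < length Xs"
      and "set \<beta> \<subseteq> {..<length Xs} \<and> length \<beta> \<le> m" and y: "y \<in> zball \<Omega> Xs x (\<xi> *\<^sub>R \<delta>)"
    moreover have "y \<in> zball \<Omega> Ys x (\<xi>Y *\<^sub>R \<delta>)"
      using zball_subset_Ys y by blast
    ultimately show "\<bar>composed_tower (GY x \<delta>) x \<delta> l \<beta> y\<bar> \<le> (\<Sum>i<length Ys. 2 ^ m * (CY m * CI i m))"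
      using Y unfolding controls_vf_with_def by (intro composed_bound) (auto dest: order_trans)
  qed
  then show ?thesis
    unfolding controls_vf_iff by blast
qed

lemma controls_W_trans:
  fixes Xs Ys :: "((real^'n \<Rightarrow> real^'n) \<times> (real^'v)) list" and e :: "'k::finite \<Rightarrow> real^'v"
  assumes "set Xs \<subseteq> set Ys" and "Ys \<noteq> []" and "\<forall>(Z, D)\<in>set Xs. is_degree D"
    and "controls_W \<Omega> Ys e W" and "\<forall>(Z, D)\<in>set Ys. controls_vf \<Omega> Xs Z D"
  shows "controls_W \<Omega> Xs e W"
proof -
  obtain \<rho> UY \<xi>Y cY HY CY where Y: "controls_W_with \<Omega> Ys e W \<rho> UY \<xi>Y cY HY CY"
    using assms(4) unfolding controls_W_iff by blast
  then have "control_nbhd \<Omega> Ys UY \<xi>Y"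
    unfolding controls_W_with_def by blast
  then obtain \<sigma> UI \<xi>I cI GI CI \<xi> where "reexpansion \<Omega> Xs Ys \<sigma> UI \<xi>I cI GI CI \<xi> \<xi>Y"
    and nbhd: "control_nbhd \<Omega> Xs (UY \<inter> (\<Inter>i<length Ys. UI i)) \<xi>"
    by (rule obtain_reexpansion[OF assms(1-3) _ assms(5)])
  then interpret reexpansion \<Omega> Xs Ys \<sigma> UI \<xi>I cI GI CI \<xi> \<xi>Y by simp
  have "controls_W_with \<Omega> Xs e W \<rho> (UY \<inter> (\<Inter>i<length Ys. UI i)) \<xi>
      (\<lambda>x \<delta> l t y. \<Sum>i<length Ys. cY x \<delta> i t y * cI i x \<delta> l y)
      (\<lambda>x \<delta> l \<alpha> \<beta> t. composed_tower (\<lambda>i a. HY x \<delta> i \<alpha> a t) x \<delta> l \<beta>)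
      (\<lambda>m. \<Sum>i<length Ys. 2 ^ m * (CY m * CI i m))"
    unfolding controls_W_with_def
  proof (intro conjI ballI allI impI nbhd)
    show "0 < \<rho>" using Y unfolding controls_W_with_def by blast
  next
    fix x and \<delta> :: "real^'v" and t :: "real^'k"
    assume "x \<in> UY \<inter> (\<Inter>i<length Ys. UI i)" and "\<delta> \<in> unit_cube" and "t \<in> ball 0 \<rho>"
    then show "expansion_on (zball \<Omega> Xs x (\<xi> *\<^sub>R \<delta>)) Xs \<delta> (\<lambda>u. W (tscale e \<delta> t, u))
        (\<lambda>l y. \<Sum>i<length Ys. cY x \<delta> i t y * cI i x \<delta> l y)
        (\<lambda>l \<beta>. composed_tower (\<lambda>i a. HY x \<delta> i (\<lambda>_. 0) a t) x \<delta> l \<beta>)"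
      using Y unfolding controls_W_with_def by (intro composed_expansion) auto
  next
    fix x and \<delta> :: "real^'v" and l \<alpha> \<beta> k and t :: "real^'k" and u
    assume "x \<in> UY \<inter> (\<Inter>i<length Ys. UI i)" "\<delta> \<in> unit_cube" "l < length Xs" "set \<beta> \<subseteq> {..<length Xs}"
      and "t \<in> ball 0 \<rho>" and u: "u \<in> zball \<Omega> Xs x (\<xi> *\<^sub>R \<delta>)"
    moreover have "u \<in> zball \<Omega> Ys x (\<xi>Y *\<^sub>R \<delta>)"
      using zball_subset_Ys u by blast
    ultimately show "((\<lambda>s. composed_tower (\<lambda>i a. HY x \<delta> i \<alpha> a (t + s *\<^sub>R axis k 1)) x \<delta> l \<beta> u)
        has_real_derivative composed_tower (\<lambda>i a. HY x \<delta> i (\<alpha>(k := Suc (\<alpha> k))) a t) x \<delta> l \<beta> u) (at 0)"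
      using Y unfolding controls_W_with_def by (intro composed_has_real_derivative) auto
  next
    fix x and \<delta> :: "real^'v" and l and \<alpha> :: "'k \<Rightarrow> nat" and \<beta>
    assume "x \<in> UY \<inter> (\<Inter>i<length Ys. UI i)" "\<delta> \<in> unit_cube" "l < length Xs" "set \<beta> \<subseteq> {..<length Xs}"
    then show "continuous_on (ball 0 \<rho> \<times> zball \<Omega> Xs x (\<xi> *\<^sub>R \<delta>))
        (\<lambda>p. composed_tower (\<lambda>i a. HY x \<delta> i \<alpha> a (fst p)) x \<delta> l \<beta> (snd p))"
      using Y unfolding controls_W_with_def
      by (intro composed_continuous_on[where \<pi>=snd])
         (auto intro: continuous_on_snd continuous_on_subset[OF _ Sigma_mono[OF order_refl zball_subset_Ys]])
  next
    fix m x and \<delta> :: "real^'v" and l and \<alpha> :: "'k \<Rightarrow> nat" and \<beta> and t :: "real^'k" and y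
    assume "x \<in> UY \<inter> (\<Inter>i<length Ys. UI i)" "\<delta> \<in> unit_cube" "l < length Xs"
      and "set \<beta> \<subseteq> {..<length Xs} \<and> sum \<alpha> UNIV + length \<beta> \<le> m"
      and "t \<in> ball 0 \<rho>" and y: "y \<in> zball \<Omega> Xs x (\<xi> *\<^sub>R \<delta>)"
    moreover have "y \<in> zball \<Omega> Ys x (\<xi>Y *\<^sub>R \<delta>)"
      using zball_subset_Ys y by blast
    ultimately show "\<bar>composed_tower (\<lambda>i a. HY x \<delta> i \<alpha> a t) x \<delta> l \<beta> y\<bar>
        \<le> (\<Sum>i<length Ys. 2 ^ m * (CY m * CI i m))"
      using Y unfolding controls_W_with_def by (intro composed_bound) (auto dest: order_trans)
  qed
  then show ?thesis
    unfolding controls_W_iff by blast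
qed

theorem lemma7p2:
  fixes \<Omega> :: "(real^'n) set"
    and X0 :: "real^'n \<Rightarrow> real^'n" and d0 :: "real^'v"
    and Xs Ys :: "((real^'n \<Rightarrow> real^'n) \<times> (real^'v)) list"
    and e :: "'k::finite \<Rightarrow> real^'v"
    and W :: "(real^'k) \<times> (real^'n) \<Rightarrow> real^'n" and V :: "((real^'k) \<times> (real^'n)) set"
  assumes "open \<Omega>" and "0 \<in> \<Omega>"
    and "smooth_on \<Omega> X0" and "is_degree d0"
    and "\<forall>(Z, D)\<in>set Xs \<union> set Ys. smooth_on \<Omega> Z \<and> is_degree D"
    and "\<forall>j \<mu>. 0 \<le> e j $ \<mu>"
    and "open V" and "(0, 0) \<in> V" and "smooth_on V W"
    and "\<forall>x. (0, x) \<in> V \<longrightarrow> W (0, x) = 0"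
    and "set Xs \<subseteq> set Ys"
  shows "(controls_vf \<Omega> Ys X0 d0 \<and> (\<forall>(Z, D)\<in>set Ys. controls_vf \<Omega> Xs Z D)
            \<longrightarrow> controls_vf \<Omega> Xs X0 d0) \<and>
         (controls_W \<Omega> Ys e W \<and> (\<forall>(Z, D)\<in>set Ys. controls_vf \<Omega> Xs Z D)
            \<longrightarrow> controls_W \<Omega> Xs e W)"
proof (cases "Ys = []")
  case True
  with assms(11) have "Xs = Ys" by simp
  then show ?thesis by simp
next
  case False
  moreover have "\<forall>(Z, D)\<in>set Xs. is_degree D"
    using assms(5) by auto
  ultimately show ?thesis
    using assms(11) by (blast intro: controls_vf_trans controls_W_trans)
qed

end
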